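(* Let $G=(V,E)$ be a finite simple connected graph with diameter $d$. Suppose there exist integers $n_1,\dots,n_d\ge 1$ with $\sum_{i=1}^d n_i=|V|-1$ such that for every vertex $v\in V$ and every $1\le i\le d$, exactly $n_i$ vertices are at distance $i$ from $v$. Then for any rank assignment $f:V\to\mathbb{R}$ under which all vertices have distinct strings, and any real numbers $k\neq 0$ and $b$, the rank assignment $v\mapsto kf(v)+b$ also gives all vertices distinct strings. Furthermore, if additionally $IDI(G)=2$, then $G$ is an ID-graph.
   Context: For a graph $G=(V,E)$ with diameter $d$, a rank assignment is a function $f:V\to\mathbb{R}$; under $f$, the string of a vertex $v$ is the $d$-vector whose $i$-th coordinate is the sum of $f(w)$ over all vertices $w$ with $d(v,w)=i$. The ID-index $IDI(G)$ is the minimum $k$ such that there exists $f:V\to\mathbb{R}$ with $|f(V)|=k$ under which all vertices have distinct strings. A red-white coloring of $G$ assigns red or white to each vertex with at least one vertex red; the code of a vertex $v$ is the $d$-vector whose $i$-th coordinate is the number of red vertices at distance $i$ from $v$. A red-white coloring in which all vertices have distinct codes is an ID-coloring, and $G$ is an ID-graph if it has an ID-coloring. *)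

theory Defs
  imports Complex_Main
begin

definition simple_graph :: "'a set \<Rightarrow> ('a \<Rightarrow> 'a \<Rightarrow> bool) \<Rightarrow> bool" where
  "simple_graph V E \<longleftrightarrow> finite V \<and> (\<forall>v w. E v w \<longrightarrow> v \<in> V \<and> w \<in> V)
     \<and> (\<forall>v w. E v w \<longrightarrow> E w v) \<and> (\<forall>v. \<not> E v v)"

definition walk_len :: "'a set \<Rightarrow> ('a \<Rightarrow> 'a \<Rightarrow> bool) \<Rightarrow> 'a \<Rightarrow> 'a \<Rightarrow> nat \<Rightarrow> bool" where
  "walk_len V E v w n \<longleftrightarrow> (\<exists>xs. length xs = Suc n \<and> hd xs = v \<and> last xs = w
     \<and> set xs \<subseteq> V \<and> (\<forall>i < n. E (xs ! i) (xs ! Suc i)))"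

definition connected_graph :: "'a set \<Rightarrow> ('a \<Rightarrow> 'a \<Rightarrow> bool) \<Rightarrow> bool" where
  "connected_graph V E \<longleftrightarrow> V \<noteq> {} \<and> (\<forall>v\<in>V. \<forall>w\<in>V. \<exists>n. walk_len V E v w n)"

definition gdist :: "'a set \<Rightarrow> ('a \<Rightarrow> 'a \<Rightarrow> bool) \<Rightarrow> 'a \<Rightarrow> 'a \<Rightarrow> nat" where
  "gdist V E v w = (LEAST n. walk_len V E v w n)"

definition diameter :: "'a set \<Rightarrow> ('a \<Rightarrow> 'a \<Rightarrow> bool) \<Rightarrow> nat" where
  "diameter V E = Max {gdist V E v w | v w. v \<in> V \<and> w \<in> V}"

text \<open>String of v under rank assignment f: the d-vector, encoded as a function on
  indices, with value 0 outside {1..d}.\<close>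
definition rank_string :: "'a set \<Rightarrow> ('a \<Rightarrow> 'a \<Rightarrow> bool) \<Rightarrow> ('a \<Rightarrow> real) \<Rightarrow> 'a \<Rightarrow> nat \<Rightarrow> real" where
  "rank_string V E f v = (\<lambda>i. if 1 \<le> i \<and> i \<le> diameter V E
      then (\<Sum>w\<in>{w\<in>V. gdist V E v w = i}. f w) else 0)"

definition distinct_strings :: "'a set \<Rightarrow> ('a \<Rightarrow> 'a \<Rightarrow> bool) \<Rightarrow> ('a \<Rightarrow> real) \<Rightarrow> bool" where
  "distinct_strings V E f \<longleftrightarrow> inj_on (rank_string V E f) V"

definition IDI :: "'a set \<Rightarrow> ('a \<Rightarrow> 'a \<Rightarrow> bool) \<Rightarrow> nat" where
  "IDI V E = (LEAST k. \<exists>f. card (f ` V) = k \<and> distinct_strings V E f)"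

text \<open>Red-white colouring given by the set R of red vertices (nonempty).\<close>
definition code :: "'a set \<Rightarrow> ('a \<Rightarrow> 'a \<Rightarrow> bool) \<Rightarrow> 'a set \<Rightarrow> 'a \<Rightarrow> nat \<Rightarrow> nat" where
  "code V E R v = (\<lambda>i. if 1 \<le> i \<and> i \<le> diameter V E
      then card {w\<in>V. w \<in> R \<and> gdist V E v w = i} else 0)"

definition ID_coloring :: "'a set \<Rightarrow> ('a \<Rightarrow> 'a \<Rightarrow> bool) \<Rightarrow> 'a set \<Rightarrow> bool" where
  "ID_coloring V E R \<longleftrightarrow> R \<subseteq> V \<and> R \<noteq> {} \<and> inj_on (code V E R) V"

definition ID_graph :: "'a set \<Rightarrow> ('a \<Rightarrow> 'a \<Rightarrow> bool) \<Rightarrow> bool" where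
  "ID_graph V E \<longleftrightarrow> (\<exists>R. ID_coloring V E R)"

end

theory Submission
  imports Defs "HOL-Library.Nat_Bijection"
begin

text \<open>Since every vertex has the same number \<open>n i\<close> of vertices at distance \<open>i\<close>, the
  \<open>i\<close>-th entry of the string of \<open>v\<close> under \<open>k f + b\<close> is \<open>k s + b n i\<close>, where \<open>s\<close> is the
  entry under \<open>f\<close>; for \<open>k \<noteq> 0\<close> this is an injective function of \<open>s\<close>, so distinct
  strings stay distinct. If \<open>IDI = 2\<close>, a distinguishing assignment takes exactly two values
  \<open>a \<noteq> c\<close>; the affine map \<open>x \<mapsto> (x - a) / (c - a)\<close> turns it into the 0/1 indicator of
  the set \<open>R\<close> of vertices of value \<open>c\<close>, and the strings of that indicator are the codes
  of the colouring with red set \<open>R\<close>. That \<open>IDI = 2\<close> is attained at all needs some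
  distinguishing assignment: \<open>2 ^ h v\<close> for an enumeration \<open>h\<close> of the vertices works,
  because the sphere of radius \<open>d(x, y)\<close> around \<open>x\<close> contains \<open>y\<close> while the one around
  \<open>y\<close> does not, and distinct sets of vertices have distinct sums of powers of two.\<close>

abbreviation sphere :: "'a set \<Rightarrow> ('a \<Rightarrow> 'a \<Rightarrow> bool) \<Rightarrow> 'a \<Rightarrow> nat \<Rightarrow> 'a set" where
  "sphere V E v i \<equiv> {w\<in>V. gdist V E v w = i}"

lemma gdist_self:
  assumes "v \<in> V"
  shows "gdist V E v v = 0"
proof -
  have "walk_len V E v v 0"
    unfolding walk_len_def using assms by (intro exI[of _ "[v]"]) auto
  then show ?thesis
    unfolding gdist_def by simp
qed

lemma gdist_pos:
  assumes "connected_graph V E" "v \<in> V" "w \<in> V" "v \<noteq> w"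
  shows "0 < gdist V E v w"
proof (rule ccontr)
  assume "\<not> 0 < gdist V E v w"
  moreover have "\<exists>n. walk_len V E v w n"
    using assms unfolding connected_graph_def by auto
  ultimately have "walk_len V E v w 0"
    unfolding gdist_def by (metis LeastI_ex neq0_conv)
  then obtain xs where "length xs = 1" "hd xs = v" "last xs = w"
    unfolding walk_len_def by auto
  with \<open>v \<noteq> w\<close> show False
    by (cases xs) auto
qed

lemma gdist_le_diameter:
  assumes "finite V" "v \<in> V" "w \<in> V"
  shows "gdist V E v w \<le> diameter V E"
proof -
  have "{gdist V E v w | v w. v \<in> V \<and> w \<in> V} = (\<lambda>(v, w). gdist V E v w) ` (V \<times> V)"
    by auto
  then have "finite {gdist V E v w | v w. v \<in> V \<and> w \<in> V}"
    using assms by simp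
  then show ?thesis
    unfolding diameter_def using assms by (intro Max_ge) auto
qed

lemma sphere_gdist_ne:
  assumes "connected_graph V E" "x \<in> V" "y \<in> V" "x \<noteq> y"
  shows "sphere V E x (gdist V E x y) \<noteq> sphere V E y (gdist V E x y)"
proof -
  have "y \<in> sphere V E x (gdist V E x y)"
    using \<open>y \<in> V\<close> by simp
  moreover have "y \<notin> sphere V E y (gdist V E x y)"
    using gdist_pos[OF assms] gdist_self[of y V E] \<open>y \<in> V\<close> by simp
  ultimately show ?thesis
    by blast
qed

lemma distinct_strings_cong:
  assumes "\<And>v. v \<in> V \<Longrightarrow> f v = g v"
  shows "distinct_strings V E f \<longleftrightarrow> distinct_strings V E g"
proof -
  have "rank_string V E f = rank_string V E g"
    unfolding rank_string_def using assms by (intro ext sum.cong) auto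
  then show ?thesis
    unfolding distinct_strings_def by simp
qed

lemma rank_string_affine:
  assumes "finite V" "1 \<le> i" "i \<le> diameter V E"
  shows "rank_string V E (\<lambda>w. k * f w + b) v i
           = k * rank_string V E f v i + b * card (sphere V E v i)"
  using assms unfolding rank_string_def by (simp add: sum.distrib sum_distrib_left)

lemma distinct_strings_affine:
  assumes "finite V"
    and spheres: "\<forall>v\<in>V. \<forall>i\<in>{1..diameter V E}. card (sphere V E v i) = n i"
    and "k \<noteq> 0" and "distinct_strings V E f"
  shows "distinct_strings V E (\<lambda>w. k * f w + b)"
  unfolding distinct_strings_def
proof (rule inj_onI)
  fix x y
  assume "x \<in> V" "y \<in> V"
    and eq: "rank_string V E (\<lambda>w. k * f w + b) x = rank_string V E (\<lambda>w. k * f w + b) y"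
  have "rank_string V E f x i = rank_string V E f y i" for i
  proof (cases "1 \<le> i \<and> i \<le> diameter V E")
    case True
    then have "k * rank_string V E f x i + b * n i = k * rank_string V E f y i + b * n i"
      using fun_cong[OF eq, of i] rank_string_affine[OF \<open>finite V\<close>] spheres \<open>x \<in> V\<close> \<open>y \<in> V\<close>
      by simp
    with \<open>k \<noteq> 0\<close> show ?thesis
      by simp
  next
    case False
    then show ?thesis
      unfolding rank_string_def by (simp only: if_False)
  qed
  then show "x = y"
    using \<open>distinct_strings V E f\<close> \<open>x \<in> V\<close> \<open>y \<in> V\<close> unfolding distinct_strings_def inj_on_def
    by blast
qed

lemma inj_on_sum_power_of_two:
  fixes h :: "'a \<Rightarrow> nat"
  assumes "finite V" "inj_on h V"
  shows "inj_on (\<lambda>A. \<Sum>w\<in>A. (2::real) ^ h w) (Pow V)"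
proof (rule inj_onI)
  fix A B
  assume "A \<in> Pow V" "B \<in> Pow V" and sums: "(\<Sum>w\<in>A. (2::real) ^ h w) = (\<Sum>w\<in>B. 2 ^ h w)"
  have encode: "real (set_encode (h ` C)) = (\<Sum>w\<in>C. 2 ^ h w)" if "C \<subseteq> V" for C
    using sum.reindex[OF inj_on_subset[OF \<open>inj_on h V\<close> that], of "(^) 2"]
    unfolding set_encode_def by simp
  have "set_encode (h ` A) = set_encode (h ` B)"
    using sums encode \<open>A \<in> Pow V\<close> \<open>B \<in> Pow V\<close> by (metis PowD of_nat_eq_iff)
  then have "h ` A = h ` B"
    using \<open>A \<in> Pow V\<close> \<open>B \<in> Pow V\<close> \<open>finite V\<close> by (simp add: set_encode_eq finite_subset)
  then show "A = B"
    using \<open>A \<in> Pow V\<close> \<open>B \<in> Pow V\<close> inj_on_image_eq_iff[OF \<open>inj_on h V\<close>] by blast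
qed

lemma distinct_strings_if_inj_on_sum:
  assumes "finite V" "connected_graph V E"
    and inj: "inj_on (\<lambda>A. \<Sum>w\<in>A. f w) (Pow V)"
  shows "distinct_strings V E f"
  unfolding distinct_strings_def
proof (rule inj_onI, rule ccontr)
  fix x y
  assume "x \<in> V" "y \<in> V" "x \<noteq> y" and eq: "rank_string V E f x = rank_string V E f y"
  define i where "i = gdist V E x y"
  have "1 \<le> i" "i \<le> diameter V E"
    using gdist_pos[OF \<open>connected_graph V E\<close> \<open>x \<in> V\<close> \<open>y \<in> V\<close> \<open>x \<noteq> y\<close>]
      gdist_le_diameter[OF \<open>finite V\<close> \<open>x \<in> V\<close> \<open>y \<in> V\<close>]
    unfolding i_def by auto
  then have "(\<Sum>w\<in>sphere V E x i. f w) = (\<Sum>w\<in>sphere V E y i. f w)"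
    using fun_cong[OF eq, of i] unfolding rank_string_def by simp
  then have "sphere V E x i = sphere V E y i"
    using inj by (auto dest: inj_onD)
  then show False
    using sphere_gdist_ne[OF \<open>connected_graph V E\<close> \<open>x \<in> V\<close> \<open>y \<in> V\<close> \<open>x \<noteq> y\<close>]
    unfolding i_def by blast
qed

lemma distinct_strings_exists:
  assumes "finite V" "connected_graph V E"
  shows "\<exists>f. distinct_strings V E f"
proof -
  obtain h :: "'a \<Rightarrow> nat" where "inj_on h V"
    using finite_imp_inj_to_nat_seg[OF \<open>finite V\<close>] by blast
  then show ?thesis
    using distinct_strings_if_inj_on_sum[OF assms] inj_on_sum_power_of_two[OF \<open>finite V\<close>]
    by blast
qed

lemma IDI_attained:
  assumes "finite V" "connected_graph V E"
  obtains f where "card (f ` V) = IDI V E" "distinct_strings V E f"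
proof -
  obtain f0 where "distinct_strings V E f0"
    using distinct_strings_exists[OF assms] by blast
  then have "\<exists>f. card (f ` V) = card (f0 ` V) \<and> distinct_strings V E f"
    by blast
  then have "\<exists>f. card (f ` V) = IDI V E \<and> distinct_strings V E f"
    unfolding IDI_def by (rule LeastI)
  with that show ?thesis
    by blast
qed

lemma rank_string_indicator:
  assumes "finite V"
  shows "rank_string V E (\<lambda>w. of_bool (w \<in> R)) v = (\<lambda>i. real (code V E R v i))"
proof
  fix i
  have "{w\<in>V. w \<in> R \<and> gdist V E v w = i} = sphere V E v i \<inter> R"
    by auto
  then show "rank_string V E (\<lambda>w. of_bool (w \<in> R)) v i = real (code V E R v i)"
    unfolding rank_string_def code_def using assms by (simp add: sum.If_cases)
qed

lemma ID_coloring_iff_distinct_strings_indicator: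
  assumes "finite V" "R \<subseteq> V" "R \<noteq> {}"
  shows "ID_coloring V E R \<longleftrightarrow> distinct_strings V E (\<lambda>w. of_bool (w \<in> R))"
proof -
  have "inj_on (code V E R) V \<longleftrightarrow> inj_on (\<lambda>v i. real (code V E R v i)) V"
    by (auto simp: inj_on_def fun_eq_iff)
  then show ?thesis
    using assms unfolding ID_coloring_def distinct_strings_def rank_string_indicator[OF \<open>finite V\<close>]
    by simp
qed

lemma ID_graph_if_two_valued_distinct_strings:
  assumes "finite V"
    and spheres: "\<forall>v\<in>V. \<forall>i\<in>{1..diameter V E}. card (sphere V E v i) = n i"
    and "card (f ` V) = 2" "distinct_strings V E f"
  shows "ID_graph V E"
proof -
  obtain a c where f_image: "f ` V = {a, c}" "a \<noteq> c"
    using \<open>card (f ` V) = 2\<close> card_2_iff by metis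
  define R where "R = {v\<in>V. f v = c}"
  have "R \<subseteq> V" "R \<noteq> {}"
    using f_image unfolding R_def by (auto simp: image_iff)
  have "c - a \<noteq> 0"
    using \<open>a \<noteq> c\<close> by simp
  then have "distinct_strings V E (\<lambda>w. (1 / (c - a)) * f w + (- a / (c - a)))"
    by (intro distinct_strings_affine[OF \<open>finite V\<close> spheres _ \<open>distinct_strings V E f\<close>]) simp
  moreover have "distinct_strings V E (\<lambda>w. (1 / (c - a)) * f w + (- a / (c - a)))
      \<longleftrightarrow> distinct_strings V E (\<lambda>w. of_bool (w \<in> R))"
  proof (rule distinct_strings_cong)
    fix v
    assume "v \<in> V"
    then show "(1 / (c - a)) * f v + (- a / (c - a)) = of_bool (v \<in> R)"
      using f_image \<open>c - a \<noteq> 0\<close> unfolding R_def by (auto simp: divide_simps)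
  qed
  ultimately have "distinct_strings V E (\<lambda>w. of_bool (w \<in> R))"
    by blast
  then show ?thesis
    unfolding ID_graph_def
    using ID_coloring_iff_distinct_strings_indicator[OF \<open>finite V\<close> \<open>R \<subseteq> V\<close> \<open>R \<noteq> {}\<close>] by blast
qed

theorem mainTheorem4:
  fixes V :: "'a set" and E :: "'a \<Rightarrow> 'a \<Rightarrow> bool" and n :: "nat \<Rightarrow> nat"
  assumes "simple_graph V E" and "connected_graph V E"
    and "\<forall>i\<in>{1..diameter V E}. n i \<ge> 1"
    and "(\<Sum>i=1..diameter V E. n i) = card V - 1"
    and "\<forall>v\<in>V. \<forall>i\<in>{1..diameter V E}. card {w\<in>V. gdist V E v w = i} = n i"
  shows "(\<forall>(f :: 'a \<Rightarrow> real) (k :: real) (b :: real). k \<noteq> 0 \<longrightarrow> distinct_strings V E f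
            \<longrightarrow> distinct_strings V E (\<lambda>v. k * f v + b))
         \<and> (IDI V E = 2 \<longrightarrow> ID_graph V E)"
proof -
  have "finite V"
    using \<open>simple_graph V E\<close> unfolding simple_graph_def by simp
  have "ID_graph V E" if "IDI V E = 2"
  proof -
    obtain f where "card (f ` V) = 2" "distinct_strings V E f"
      using IDI_attained[OF \<open>finite V\<close> \<open>connected_graph V E\<close>] \<open>IDI V E = 2\<close> by metis
    then show ?thesis
      using ID_graph_if_two_valued_distinct_strings[OF \<open>finite V\<close> assms(5)] by blast
  qed
  then show ?thesis
    using distinct_strings_affine[OF \<open>finite V\<close> assms(5)] by blast
qed

end
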